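(* Let $k\ge 3$, let $\nu:(\mathbb{P}^1)^k\to\mathbb{P}^{2^k-1}$ be the Segre embedding, and let $\Gamma\subset(\mathbb{P}^1)^k$ be a connected curvilinear zero-dimensional scheme of degree $3$ with $\deg(\pi_i(\Gamma))=3$ for all $i$; let $o$ be the support point of $\Gamma$. Then for every divisor $F\in|\mathcal{O}_{(\mathbb{P}^1)^k}(\epsilon_k)|$ (i.e. $F=\pi_k^{-1}(t)$ for a point $t\in\mathbb{P}^1$) with $o\notin F$, we have $\langle\nu(\Gamma)\rangle\cap\langle\nu(F)\rangle=\emptyset$.
   Context: Work over an algebraically closed field. $\pi_i:(\mathbb{P}^1)^k\to\mathbb{P}^1$ is the $i$-th projection; $\epsilon_k=(0,\dots,0,1)\in\mathbb{N}^k$, so $\mathcal{O}(\epsilon_k)=\pi_k^*\mathcal{O}_{\mathbb{P}^1}(1)$. A zero-dimensional scheme is curvilinear if each connected component has Zariski tangent space of dimension $\le1$. $\langle Y\rangle$ denotes the linear span. *)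

theory Defs
  imports "HOL-Computational_Algebra.Polynomial"
begin

definition alg_closed :: "'a::field itself \<Rightarrow> bool" where
  "alg_closed _ \<longleftrightarrow> (\<forall>p::'a poly. degree p > 0 \<longrightarrow> (\<exists>x. poly p x = 0))"

text \<open>Points of P^1 are given by nonzero homogeneous coordinate pairs.
  The ambient space of the Segre embedding of (P^1)^k is P(K^(2^k)); coordinates are
  indexed by subsets S of {0..<k} (S = set of factors where the second coordinate is taken).
  Vectors are functions nat set => K, zero outside Pow {..<k}.\<close>
definition segre :: "nat \<Rightarrow> (nat \<Rightarrow> 'a \<times> 'a) \<Rightarrow> nat set \<Rightarrow> 'a::comm_ring_1" where
  "segre k q = (\<lambda>S. if S \<subseteq> {..<k}
      then (\<Prod>i<k. if i \<in> S then snd (q i) else fst (q i)) else 0)"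

definition lspan :: "('b \<Rightarrow> 'a::field) set \<Rightarrow> ('b \<Rightarrow> 'a) set" where
  "lspan X = {v. \<exists>Y c. finite Y \<and> Y \<subseteq> X \<and> v = (\<lambda>S. \<Sum>y\<in>Y. c y * y S)}"

text \<open>A connected curvilinear degree-3 scheme is the image of a closed embedding
  Spec K[t]/(t^3) -> (P^1)^k.  Such a morphism is given by a k-tuple of pairs of
  polynomials p i = (a_i(t), b_i(t)) (homogeneous coordinates of the i-th component,
  only taken modulo t^3) with (a_i(0), b_i(0)) \<noteq> (0,0).\<close>
definition jet_ok :: "nat \<Rightarrow> (nat \<Rightarrow> 'a::field poly \<times> 'a poly) \<Rightarrow> bool" where
  "jet_ok k p \<longleftrightarrow> (\<forall>i<k. (poly (fst (p i)) 0, poly (snd (p i)) 0) \<noteq> (0, 0))"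

definition jet_pt :: "(nat \<Rightarrow> 'a::field poly \<times> 'a poly) \<Rightarrow> nat \<Rightarrow> 'a \<times> 'a" where
  "jet_pt p i = (poly (fst (p i)) 0, poly (snd (p i)) 0)"

text \<open>Wronskian-type determinant of the i-th component at t = 0; it is nonzero iff the
  composite Spec K[t]/(t^3) -> P^1 (via pi_i) is a closed embedding, i.e. iff the
  scheme-theoretic image pi_i(Gamma) has degree 3.\<close>
definition jet_det :: "(nat \<Rightarrow> 'a::field poly \<times> 'a poly) \<Rightarrow> nat \<Rightarrow> 'a" where
  "jet_det p i = poly (fst (p i)) 0 * poly (pderiv (snd (p i))) 0
              - poly (snd (p i)) 0 * poly (pderiv (fst (p i))) 0"

text \<open>Gamma = image of the jet is a (curvilinear, connected) degree 3 subscheme: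
  the jet is a closed embedding (some component has nonzero derivative).\<close>
definition curvilinear_deg3_jet :: "nat \<Rightarrow> (nat \<Rightarrow> 'a::field poly \<times> 'a poly) \<Rightarrow> bool" where
  "curvilinear_deg3_jet k p \<longleftrightarrow> jet_ok k p \<and> (\<exists>i<k. jet_det p i \<noteq> 0)"

definition proj_deg3 :: "(nat \<Rightarrow> 'a::field poly \<times> 'a poly) \<Rightarrow> nat \<Rightarrow> bool" where
  "proj_deg3 p i \<longleftrightarrow> jet_det p i \<noteq> 0"

definition segre_jet :: "nat \<Rightarrow> (nat \<Rightarrow> 'a::field poly \<times> 'a poly) \<Rightarrow> nat set \<Rightarrow> 'a poly" where
  "segre_jet k p = (\<lambda>S. if S \<subseteq> {..<k}
      then (\<Prod>i<k. if i \<in> S then snd (p i) else fst (p i)) else 0)"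

text \<open>Linear span <nu(Gamma)> (as a vector subspace of K^(2^k)): a linear form vanishes on
  nu(Gamma) iff it kills the coefficients of t^0, t^1, t^2 of the Segre jet.\<close>
definition span_nu_Gamma :: "nat \<Rightarrow> (nat \<Rightarrow> 'a::field poly \<times> 'a poly) \<Rightarrow> (nat set \<Rightarrow> 'a) set" where
  "span_nu_Gamma k p = lspan {(\<lambda>S. coeff (segre_jet k p S) m) | m. m < 3}"

text \<open>Linear span <nu(F)> for F = pi_k^{-1}(t), t a point of P^1 (the last factor is k-1
  with 0-based indexing).\<close>
definition span_nu_fiber :: "nat \<Rightarrow> 'a::field \<times> 'a \<Rightarrow> (nat set \<Rightarrow> 'a) set" where
  "span_nu_fiber k t = lspan {segre k q | q. (\<forall>i<k. q i \<noteq> (0, 0)) \<and> q (k - 1) = t}"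

text \<open>o \<notin> F: the last coordinate of o differs from t in P^1.\<close>
definition not_in_fiber :: "'a::field \<times> 'a \<Rightarrow> 'a \<times> 'a \<Rightarrow> bool" where
  "not_in_fiber o' t \<longleftrightarrow> fst o' * snd t - snd o' * fst t \<noteq> 0"

end

theory Submission
  imports Defs
begin

(* A vector of <nu(Gamma)> has the form u S = lambda (nu(p) S) for a linear form lambda on
   K[t]/(t^3), evaluated on the Segre jet of p.  Membership in <nu(F)>, F = {x_k = (t0 : t1)},
   means t1 u(S) = t0 u(S + {k}), i.e. lambda kills nu'(S) g, where nu' is the Segre jet of the
   first k - 1 factors and g = t1 a_k - t0 b_k is a unit of K[[t]] because o is not in F.
   Fixing each of the factors 3, ..., k - 1 to a coordinate that is a unit, lambda(_ q) kills
   every product x y with x in {a_1, b_1}, y in {a_2, b_2}, for a unit q.  Since pi_1(Gamma) and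
   pi_2(Gamma) have degree 3, both pairs span K[t]/(t^2), so these products span K[t]/(t^3);
   hence lambda = 0. *)

definition coeff_form :: "'a \<Rightarrow> 'a \<Rightarrow> 'a \<Rightarrow> 'a poly \<Rightarrow> 'a::comm_ring_1" where
  "coeff_form l0 l1 l2 f = l0 * coeff f 0 + l1 * coeff f 1 + l2 * coeff f 2"

lemma coeff_form_mult:
  "coeff_form l0 l1 l2 (f * q) =
     coeff_form (l0 * coeff q 0 + l1 * coeff q 1 + l2 * coeff q 2)
       (l1 * coeff q 0 + l2 * coeff q 1) (l2 * coeff q 0) f"
  by (simp add: coeff_form_def coeff_mult numeral_2_eq_2 atMost_Suc algebra_simps)

lemma coeff_form_diff_smult:
  "coeff_form l0 l1 l2 (smult a f - smult b g) = a * coeff_form l0 l1 l2 f - b * coeff_form l0 l1 l2 g"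
  unfolding coeff_form_def by (simp add: algebra_simps)

lemma coeff_form_eq_0_if_kills_products:
  fixes a0 b0 a1 b1 :: "'a::field poly"
  assumes "coeff a0 0 * coeff b0 1 - coeff b0 0 * coeff a0 1 \<noteq> 0"
    and "coeff a1 0 * coeff b1 1 - coeff b1 0 * coeff a1 1 \<noteq> 0"
    and "coeff_form l0 l1 l2 (a0 * a1) = 0" "coeff_form l0 l1 l2 (a0 * b1) = 0"
    and "coeff_form l0 l1 l2 (b0 * a1) = 0" "coeff_form l0 l1 l2 (b0 * b1) = 0"
  shows "l0 = 0 \<and> l1 = 0 \<and> l2 = 0"
  using assms unfolding coeff_form_def
  by (simp add: coeff_mult numeral_2_eq_2 atMost_Suc) algebra

lemma coeff_form_eq_0_if_kills_products_times_unit: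
  fixes a0 b0 a1 b1 q :: "'a::field poly"
  assumes "coeff a0 0 * coeff b0 1 - coeff b0 0 * coeff a0 1 \<noteq> 0"
    and "coeff a1 0 * coeff b1 1 - coeff b1 0 * coeff a1 1 \<noteq> 0"
    and "coeff q 0 \<noteq> 0"
    and "\<And>x y. x \<in> {a0, b0} \<Longrightarrow> y \<in> {a1, b1} \<Longrightarrow> coeff_form l0 l1 l2 (x * y * q) = 0"
  shows "l0 = 0 \<and> l1 = 0 \<and> l2 = 0"
proof -
  let ?n0 = "l0 * coeff q 0 + l1 * coeff q 1 + l2 * coeff q 2"
  let ?n1 = "l1 * coeff q 0 + l2 * coeff q 1"
  let ?n2 = "l2 * coeff q 0"
  have "coeff_form ?n0 ?n1 ?n2 (x * y) = 0" if "x \<in> {a0, b0}" "y \<in> {a1, b1}" for x y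
    using assms(4)[OF that] by (simp only: coeff_form_mult[of _ _ _ "x * y" q])
  then have "?n0 = 0 \<and> ?n1 = 0 \<and> ?n2 = 0"
    by (intro coeff_form_eq_0_if_kills_products[OF assms(1,2)]) simp_all
  then show ?thesis
    using assms(3) by auto
qed

lemma zero_in_lspan: "(\<lambda>_. 0) \<in> lspan X"
  unfolding lspan_def by (rule CollectI, rule exI[of _ "{}"]) auto

lemma lspan_relation:
  assumes "\<And>x. x \<in> X \<Longrightarrow> a * x S = b * x S'" and "v \<in> lspan X"
  shows "a * v S = b * v S'"
proof -
  obtain Y c where "Y \<subseteq> X" "v = (\<lambda>S. \<Sum>y\<in>Y. c y * y S)"
    using assms(2) unfolding lspan_def by blast
  then show ?thesis
    using assms(1) by (auto simp: sum_distrib_left mult.left_commute intro!: sum.cong)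
qed

lemma lspan_coeff_vectors:
  fixes F :: "'b \<Rightarrow> 'a::field poly"
  assumes "v \<in> lspan {(\<lambda>S. coeff (F S) m) | m. m < 3}"
  obtains l0 l1 l2 where "v = (\<lambda>S. coeff_form l0 l1 l2 (F S))"
proof -
  define G where "G m = (\<lambda>S. coeff (F S) m)" for m
  obtain Y c where Y: "Y \<subseteq> G ` {..<3}" "v = (\<lambda>S. \<Sum>y\<in>Y. c y * y S)"
    using assms unfolding lspan_def G_def by blast
  obtain M where M: "M \<subseteq> {..<3}" "Y = G ` M" "inj_on G M"
    using subset_image_inj[THEN iffD1, OF Y(1)] by blast
  define l where "l m = (if m \<in> M then c (G m) else 0)" for m
  have "(\<Sum>y\<in>Y. c y * y S) = (\<Sum>m<3. l m * coeff (F S) m)" for S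
  proof -
    have "(\<Sum>y\<in>Y. c y * y S) = (\<Sum>m\<in>M. c (G m) * coeff (F S) m)"
      unfolding M(2) sum.reindex[OF M(3)] by (simp add: G_def)
    also have "\<dots> = (\<Sum>m\<in>{..<3} \<inter> M. c (G m) * coeff (F S) m)"
      using M(1) by (simp add: Int_absorb1)
    also have "\<dots> = (\<Sum>m<3. l m * coeff (F S) m)"
      by (auto simp add: sum.inter_restrict l_def intro!: sum.cong)
    finally show ?thesis .
  qed
  then have "v = (\<lambda>S. coeff_form (l 0) (l 1) (l 2) (F S))"
    using Y(2) by (simp add: coeff_form_def numeral_3_eq_3 numeral_2_eq_2 lessThan_Suc add_ac)
  then show thesis using that by blast
qed

lemma segre_jet_eq_segre: "segre_jet k p = segre k p"
  unfolding segre_jet_def segre_def ..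

lemma segre_Suc:
  assumes "S \<subseteq> {..<n}"
  shows "segre (Suc n) q S = segre n q S * fst (q n)"
    and "segre (Suc n) q (insert n S) = segre n q S * snd (q n)"
proof -
  have "n \<notin> S" using assms by auto
  moreover have "(\<Prod>i<n. if i \<in> insert n S then snd (q i) else fst (q i))
      = (\<Prod>i<n. if i \<in> S then snd (q i) else fst (q i))"
    by (rule prod.cong) auto
  ultimately show "segre (Suc n) q S = segre n q S * fst (q n)"
    and "segre (Suc n) q (insert n S) = segre n q S * snd (q n)"
    using assms by (auto simp: segre_def lessThan_Suc mult.commute)
qed

lemma segre_two_products:
  assumes "x \<in> {fst (q 0), snd (q 0)}" and "y \<in> {fst (q 1), snd (q 1)}"
  obtains S where "S \<subseteq> {..<2}" and "segre 2 q S = x * y"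
proof -
  have segre_0: "segre 0 q {} = 1" by (simp add: segre_def)
  obtain S0 where S0: "S0 \<subseteq> {..<1}" "segre 1 q S0 = x"
  proof (cases "x = fst (q 0)")
    case True
    then show thesis using that[of "{}"] segre_Suc(1)[of "{}" 0 q] segre_0 by simp
  next
    case False
    then show thesis using that[of "{0}"] segre_Suc(2)[of "{}" 0 q] segre_0 assms(1) by simp
  qed
  show thesis
  proof (cases "y = fst (q 1)")
    case True
    then show thesis using that[of S0] segre_Suc(1)[OF S0(1), of q] S0
      by (auto simp: numeral_2_eq_2)
  next
    case False
    then show thesis using that[of "insert 1 S0"] segre_Suc(2)[OF S0(1), of q] S0 assms(2)
      by (auto simp: numeral_2_eq_2)
  qed
qed

lemma segre_fix_unit_coordinates:
  fixes q :: "nat \<Rightarrow> 'a::idom poly \<times> 'a poly"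
  assumes "m \<le> n" and "\<And>i. m \<le> i \<Longrightarrow> i < n \<Longrightarrow> coeff (fst (q i)) 0 \<noteq> 0 \<or> coeff (snd (q i)) 0 \<noteq> 0"
  obtains T h where "T \<subseteq> {m..<n}" and "coeff h 0 \<noteq> 0"
    and "\<And>S. S \<subseteq> {..<m} \<Longrightarrow> segre n q (S \<union> T) = segre m q S * h"
proof -
  have "\<exists>T h. T \<subseteq> {m..<n} \<and> coeff h 0 \<noteq> 0 \<and>
      (\<forall>S \<subseteq> {..<m}. segre n q (S \<union> T) = segre m q S * h)"
    using assms
  proof (induction n rule: dec_induct)
    case base
    show ?case by (rule exI[of _ "{}"], rule exI[of _ 1]) simp
  next
    case (step j)
    then obtain T h where T: "T \<subseteq> {m..<j}" "coeff h 0 \<noteq> 0"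
        "\<forall>S \<subseteq> {..<m}. segre j q (S \<union> T) = segre m q S * h"
      by auto
    have sub: "S \<union> T \<subseteq> {..<j}" if "S \<subseteq> {..<m}" for S
      using that T(1) step.hyps(1) by auto
    show ?case
    proof (cases "coeff (fst (q j)) 0 = 0")
      case True
      then have unit: "coeff (snd (q j)) 0 \<noteq> 0"
        using step.prems step.hyps by auto
      have "segre (Suc j) q (S \<union> insert j T) = segre m q S * (h * snd (q j))"
        if "S \<subseteq> {..<m}" for S
        using segre_Suc(2)[OF sub[OF that], of q] T(3) that by (simp add: mult.assoc)
      then show ?thesis
        using T(1,2) unit step.hyps
        by (intro exI[of _ "insert j T"] exI[of _ "h * snd (q j)"]) (auto simp: coeff_mult_0)
    next
      case False
      have "segre (Suc j) q (S \<union> T) = segre m q S * (h * fst (q j))"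
        if "S \<subseteq> {..<m}" for S
        using segre_Suc(1)[OF sub[OF that], of q] T(3) that by (simp add: mult.assoc)
      then show ?thesis
        using T(1,2) False step.hyps
        by (intro exI[of _ T] exI[of _ "h * fst (q j)"]) (auto simp: coeff_mult_0)
    qed
  qed
  then show thesis using that by blast
qed

lemma jet_det_eq:
  "jet_det p i = coeff (fst (p i)) 0 * coeff (snd (p i)) 1 - coeff (snd (p i)) 0 * coeff (fst (p i)) 1"
  by (simp add: jet_det_def poly_0_coeff_0 coeff_pderiv)

lemma span_nu_fiber_relation:
  assumes "v \<in> span_nu_fiber (Suc n) (t0, t1)" and "S \<subseteq> {..<n}"
  shows "t1 * v S = t0 * v (insert n S)"
  using assms(1) unfolding span_nu_fiber_def
  by (rule lspan_relation[rotated]) (auto simp: segre_Suc[OF assms(2)] mult_ac)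

lemma span_nu_Gamma_inter_fiber:
  assumes "u \<in> span_nu_Gamma (Suc n) p" and "u \<in> span_nu_fiber (Suc n) (t0, t1)"
  obtains l0 l1 l2 where "u = (\<lambda>S. coeff_form l0 l1 l2 (segre (Suc n) p S))"
    and "\<And>S. S \<subseteq> {..<n} \<Longrightarrow>
      coeff_form l0 l1 l2 (segre n p S * (smult t1 (fst (p n)) - smult t0 (snd (p n)))) = 0"
proof -
  obtain l0 l1 l2 where l: "u = (\<lambda>S. coeff_form l0 l1 l2 (segre (Suc n) p S))"
    using assms(1) unfolding span_nu_Gamma_def segre_jet_eq_segre by (blast elim: lspan_coeff_vectors)
  have "coeff_form l0 l1 l2 (segre n p S * (smult t1 (fst (p n)) - smult t0 (snd (p n)))) = 0"
    if "S \<subseteq> {..<n}" for S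
  proof -
    have "coeff_form l0 l1 l2 (segre n p S * (smult t1 (fst (p n)) - smult t0 (snd (p n))))
        = t1 * u S - t0 * u (insert n S)"
      by (simp add: l segre_Suc[OF that] coeff_form_diff_smult algebra_simps)
    also have "\<dots> = 0"
      using span_nu_fiber_relation[OF assms(2) that] by simp
    finally show ?thesis .
  qed
  with l that show thesis by blast
qed

lemma coeff_form_eq_0_if_kills_segre_times_unit:
  fixes p :: "nat \<Rightarrow> 'a::field poly \<times> 'a poly"
  assumes "2 \<le> n" and "jet_ok n p" and "jet_det p 0 \<noteq> 0" and "jet_det p 1 \<noteq> 0"
    and "coeff g 0 \<noteq> 0"
    and kills: "\<And>S. S \<subseteq> {..<n} \<Longrightarrow> coeff_form l0 l1 l2 (segre n p S * g) = 0"
  shows "l0 = 0 \<and> l1 = 0 \<and> l2 = 0"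
proof -
  obtain T h where T: "T \<subseteq> {2..<n}" "coeff h 0 \<noteq> 0"
      "\<And>S. S \<subseteq> {..<2} \<Longrightarrow> segre n p (S \<union> T) = segre 2 p S * h"
    by (rule segre_fix_unit_coordinates[of 2 n p])
      (use assms(1,2) in \<open>auto simp: jet_ok_def poly_0_coeff_0\<close>)
  have kills_products: "coeff_form l0 l1 l2 (x * y * (h * g)) = 0"
    if xy: "x \<in> {fst (p 0), snd (p 0)}" "y \<in> {fst (p 1), snd (p 1)}" for x y
  proof -
    obtain S where S: "S \<subseteq> {..<2}" "segre 2 p S = x * y"
      using segre_two_products[OF xy] .
    have "S \<union> T \<subseteq> {..<n}"
      using S(1) T(1) assms(1) by (auto simp: subset_eq)
    then show ?thesis
      using kills[of "S \<union> T"] T(3)[OF S(1)] S(2) by (simp add: mult.assoc)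
  qed
  have unit: "coeff (h * g) 0 \<noteq> 0"
    using assms(5) T(2) by (simp add: coeff_mult_0)
  show ?thesis
    using assms(3,4) unfolding jet_det_eq
    by (rule coeff_form_eq_0_if_kills_products_times_unit[OF _ _ unit kills_products])
qed

theorem claim1:
  fixes k :: nat and p :: "nat \<Rightarrow> 'a::field poly \<times> 'a poly" and t :: "'a \<times> 'a"
  assumes "alg_closed TYPE('a)"
    and "k \<ge> 3"
    and "curvilinear_deg3_jet k p"
    and "\<forall>i<k. proj_deg3 p i"
    and "t \<noteq> (0, 0)"
    and "not_in_fiber (jet_pt p (k - 1)) t"
  shows "span_nu_Gamma k p \<inter> span_nu_fiber k t = {(\<lambda>S. 0)}"
proof
  obtain n where k: "k = Suc n" and "2 \<le> n"
    using assms(2) by (cases k) auto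
  obtain t0 t1 where t: "t = (t0, t1)" by (cases t)
  have g_unit: "coeff (smult t1 (fst (p n)) - smult t0 (snd (p n))) 0 \<noteq> 0"
    using assms(6) by (simp add: t k not_in_fiber_def jet_pt_def poly_0_coeff_0 algebra_simps)
  have jet: "jet_ok n p"
    using assms(3) by (simp add: k curvilinear_deg3_jet_def jet_ok_def)
  have dets: "jet_det p 0 \<noteq> 0" "jet_det p 1 \<noteq> 0"
    using assms(4) k \<open>2 \<le> n\<close> by (simp_all add: proj_deg3_def)
  show "span_nu_Gamma k p \<inter> span_nu_fiber k t \<subseteq> {\<lambda>S. 0}"
  proof
    fix u assume "u \<in> span_nu_Gamma k p \<inter> span_nu_fiber k t"
    then have "u \<in> span_nu_Gamma (Suc n) p" "u \<in> span_nu_fiber (Suc n) (t0, t1)"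
      by (simp_all add: k t)
    then obtain l0 l1 l2 where l: "u = (\<lambda>S. coeff_form l0 l1 l2 (segre (Suc n) p S))"
      and kills: "\<And>S. S \<subseteq> {..<n} \<Longrightarrow>
        coeff_form l0 l1 l2 (segre n p S * (smult t1 (fst (p n)) - smult t0 (snd (p n)))) = 0"
      by (rule span_nu_Gamma_inter_fiber) (rule that)
    have "l0 = 0 \<and> l1 = 0 \<and> l2 = 0"
      by (rule coeff_form_eq_0_if_kills_segre_times_unit[OF \<open>2 \<le> n\<close> jet dets g_unit kills])
    then show "u \<in> {\<lambda>S. 0}"
      by (simp add: l coeff_form_def)
  qed
  show "{\<lambda>S. 0} \<subseteq> span_nu_Gamma k p \<inter> span_nu_fiber k t"
    by (simp add: span_nu_Gamma_def span_nu_fiber_def zero_in_lspan)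
qed

end
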